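(* Let $x\in\mathbb{R}^N$, $\eta_x>0$, and let $\phi:\mathbb{R}^N\to\mathbb{R}$ satisfy hypothesis (H) at $x$ with radius $\eta_x$. Then for every $\epsilon\in(0,\eta_x)$, $R>\max\{\eta_x,1\}$ and $\alpha\in(0,\frac12)$: $$\sup_{|y|=1}\Big|\fint_{T^{\epsilon,R,\alpha}(y)}\phi(x+z)\,\mathrm{d}\mu_s^N(z)-\fint_\epsilon^\infty\phi(x+ty)\,\mathrm{d}\mu_s(t)\Big|\le 2\Big(\frac{\epsilon}{R}\Big)^{2s}\|\phi\|_{L^\infty}+\max\Big\{2\big(|p_x|+2C_x\eta_x\big)\eta_x\alpha,\ 3R\,\omega_\phi(\alpha)\Big\}.$$
   Context: Fix $N\ge1$ and $s\in(\frac12,1)$. Let $C_s=\frac{4^s s\,\Gamma(\frac12+s)}{\pi^{1/2}\Gamma(1-s)}$, and let $\mu_s$ be the Borel measure on $(0,\infty)$ with $\mathrm{d}\mu_s(t)=C_s t^{-1-2s}\,\mathrm{d}t$; write $\fint_\epsilon^\infty g\,\mathrm{d}\mu_s=\frac{1}{\mu_s((\epsilon,\infty))}\int_\epsilon^\infty g\,\mathrm{d}\mu_s$. Let $C(N,s)=\frac{4^s s\,\Gamma(\frac N2+s)}{\pi^{N/2}\Gamma(1-s)}$ and let $\mu_s^N$ be the Borel measure on $\mathbb{R}^N\setminus\{0\}$ with $\mathrm{d}\mu_s^N(z)=C(N,s)|z|^{-N-2s}\,\mathrm{d}z$; for a Borel set $T$ with $0<\mu_s^N(T)<\infty$, $\fint_T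 g\,\mathrm{d}\mu_s^N=\frac{1}{\mu_s^N(T)}\int_T g\,\mathrm{d}\mu_s^N$. For $y\neq0$, $0<\epsilon<R$, $\alpha>0$, let $T^{\epsilon,R,\alpha}(y)=\{z\in\mathbb{R}^N:\ \sin\frac{\angle(y,z)}{2}<\alpha,\ \langle y,z\rangle>0,\ \epsilon<|z|<R\}$, where $\angle(y,z)\in[0,\pi]$ is the angle between $y$ and $z$. Hypothesis (H) at $x$ with radius $\eta_x>0$: $\phi:\mathbb{R}^N\to\mathbb{R}$ is bounded and Borel; (i) $\phi\in C^2(\bar B_{\eta_x}(x))$, and we set $p_x=\nabla\phi(x)$, $C_x=\frac12\|\nabla^2\phi\|_{L^\infty(B_{\eta_x}(x))}$; (ii) $\phi$ is bounded and uniformly continuous on $\mathbb{R}^N\setminus\bar B_{\eta_x}(x)$, with modulus $\omega_\phi(a)=\sup\{|\phi(z)-\phi(w)|: z,w\in\mathbb{R}^N\setminus\bar B_{\eta_x}(x),\ |z-w|\le a\}$. *)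

theory Defs
  imports "HOL-Analysis.Analysis"
begin

definition Cs :: "real \<Rightarrow> real" where
  "Cs s = 4 powr s * s * Gamma (1/2 + s) / (sqrt pi * Gamma (1 - s))"

definition mu_s :: "real \<Rightarrow> real measure" where
  "mu_s s = density lborel (\<lambda>t. ennreal (if t > 0 then Cs s * t powr (- 1 - 2 * s) else 0))"

definition avg_mu_s :: "real \<Rightarrow> real \<Rightarrow> (real \<Rightarrow> real) \<Rightarrow> real" where
  "avg_mu_s s eps g = (\<integral>t. indicator {eps<..} t * g t \<partial>(mu_s s)) / measure (mu_s s) {eps<..}"

definition CNs :: "nat \<Rightarrow> real \<Rightarrow> real" where
  "CNs N s = 4 powr s * s * Gamma (real N / 2 + s) / (pi powr (real N / 2) * Gamma (1 - s))"

definition mu_sN :: "real \<Rightarrow> ('a::euclidean_space) measure" where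
  "mu_sN s = density lborel
     (\<lambda>z. ennreal (if z \<noteq> 0 then CNs DIM('a) s * norm z powr (- real DIM('a) - 2 * s) else 0))"

definition avg_mu_sN :: "real \<Rightarrow> ('a::euclidean_space) set \<Rightarrow> ('a \<Rightarrow> real) \<Rightarrow> real" where
  "avg_mu_sN s T g = (\<integral>z. indicator T z * g z \<partial>(mu_sN s)) / measure (mu_sN s) T"

definition vangle :: "'a::euclidean_space \<Rightarrow> 'a \<Rightarrow> real" where
  "vangle y z = arccos ((y \<bullet> z) / (norm y * norm z))"

definition Tset :: "'a::euclidean_space \<Rightarrow> real \<Rightarrow> real \<Rightarrow> real \<Rightarrow> 'a set" where
  "Tset y eps R \<alpha> = {z. sin (vangle y z / 2) < \<alpha> \<and> y \<bullet> z > 0 \<and> eps < norm z \<and> norm z < R}"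

definition modulus_out :: "('a::euclidean_space \<Rightarrow> real) \<Rightarrow> 'a \<Rightarrow> real \<Rightarrow> real \<Rightarrow> real" where
  "modulus_out \<phi> x \<eta> a = (SUP (z, w) \<in> {(z, w). z \<notin> cball x \<eta> \<and> w \<notin> cball x \<eta> \<and> dist z w \<le> a}.
       \<bar>\<phi> z - \<phi> w\<bar>)"

end

theory Submission
  imports Defs
begin

text \<open>The set \<open>T = Tset y \<epsilon> R \<alpha>\<close> is a circular cone of half-aperture
  \<open>arccos (1 - 2\<alpha>\<^sup>2) < 54/25 \<alpha>\<close> around \<open>y\<close>, cut to the annulus \<open>\<epsilon> < |z| < R\<close>. Compare \<open>\<phi> (x + z)\<close>
  with its value \<open>\<phi> (x + |z| y)\<close> on the axis. Inside the ball \<open>B\<^sub>\<eta>(x)\<close> the mean value theorem bounds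
  the difference by \<open>(|\<nabla>\<phi>(x)| + 2 C\<^sub>x \<eta>) 2 \<alpha> \<eta>\<close>, because \<open>|z - |z| y| \<le> 2 \<alpha> |z|\<close>; outside it, one walks
  from \<open>|z| y\<close> to \<open>z\<close> along a great circle in \<open>\<lceil>|z| \<theta> / \<alpha>\<rceil> \<le> 3 R\<close> steps of length at most \<open>\<alpha>\<close>,
  each costing at most \<open>\<omega>\<^sub>\<phi>(\<alpha>)\<close>.

  In polar coordinates the restriction of \<open>\<mu>\<^sub>s\<^sup>N\<close> to the cone is pushed forward by the norm to
  a constant multiple of \<open>\<mu>\<^sub>s\<close> on \<open>(\<epsilon>, R)\<close>, so the \<open>\<mu>\<^sub>s\<^sup>N\<close>-average of \<open>\<phi> (x + |z| y)\<close> over \<open>T\<close> is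
  the \<open>\<mu>\<^sub>s\<close>-average of \<open>t \<mapsto> \<phi> (x + t y)\<close> over \<open>(\<epsilon>, R)\<close>. Extending that interval to \<open>(\<epsilon>, \<infinity>)\<close>
  adds the relative mass \<open>\<mu>\<^sub>s [R, \<infinity>) / \<mu>\<^sub>s (\<epsilon>, \<infinity>) = (\<epsilon>/R)\<^sup>2\<^sup>s\<close>, which moves an average of a
  function bounded by \<open>\<parallel>\<phi>\<parallel>\<^sub>\<infinity>\<close> by at most twice that mass times \<open>\<parallel>\<phi>\<parallel>\<^sub>\<infinity>\<close>.\<close>

section \<open>Geometry of the cone\<close>

definition circ_cone :: "'a::euclidean_space \<Rightarrow> real \<Rightarrow> 'a set" where
  "circ_cone y k = {z. k * norm z < y \<bullet> z}"

lemma circ_cone_borel [measurable]: "circ_cone y k \<in> sets borel"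
  unfolding circ_cone_def by measurable

lemma sin_half_sq: "(sin ((x::real) / 2))\<^sup>2 = (1 - cos x) / 2"
  using cos_double_sin[of "x / 2"] by simp

lemma sq_less_quarter: "0 < (\<alpha>::real) \<Longrightarrow> \<alpha> < 1/2 \<Longrightarrow> \<alpha>\<^sup>2 < 1/4"
  using power_strict_mono[of \<alpha> "1/2" 2] by (simp add: power_divide)

text \<open>For a unit axis \<open>y\<close>, the half-angle condition \<open>sin (\<angle>(y,z)/2) < \<alpha>\<close> reads
  \<open>cos \<angle>(y,z) > 1 - 2\<alpha>\<^sup>2\<close>.\<close>
lemma Tset_eq_circ_cone:
  fixes y :: "'a::euclidean_space"
  assumes y: "norm y = 1" and \<alpha>: "0 < \<alpha>" "\<alpha> < 1/2"
  shows "Tset y \<epsilon> R \<alpha> = circ_cone y (1 - 2 * \<alpha>\<^sup>2) \<inter> {z. \<epsilon> < norm z \<and> norm z < R}"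
proof -
  have "sin (vangle y z / 2) < \<alpha> \<and> 0 < y \<bullet> z \<longleftrightarrow> (1 - 2 * \<alpha>\<^sup>2) * norm z < y \<bullet> z" for z
  proof (cases "0 < y \<bullet> z")
    case False
    have "0 \<le> (1 - 2 * \<alpha>\<^sup>2) * norm z" using sq_less_quarter[OF \<alpha>] by simp
    then show ?thesis using False by auto
  next
    case True
    then have nz: "norm z > 0" by auto
    define c where "c = (y \<bullet> z) / norm z"
    have c: "0 < c" "c \<le> 1"
      using True nz norm_cauchy_schwarz[of y z] y by (auto simp: c_def field_simps)
    have "0 \<le> arccos c" "arccos c \<le> pi" using c by (auto intro: arccos_lbound arccos_ubound)
    then have sin_nonneg: "0 \<le> sin (arccos c / 2)" by (intro sin_ge_zero) auto
    have "sin (arccos c / 2) < \<alpha> \<longleftrightarrow> (sin (arccos c / 2))\<^sup>2 < \<alpha>\<^sup>2"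
      using power_strict_mono[of "sin (arccos c / 2)" \<alpha> 2] sin_nonneg \<alpha>
        power_less_imp_less_base[of "sin (arccos c / 2)" 2 \<alpha>] by auto
    also have "\<dots> \<longleftrightarrow> 1 - 2 * \<alpha>\<^sup>2 < c" using c by (auto simp: sin_half_sq)
    also have "\<dots> \<longleftrightarrow> (1 - 2 * \<alpha>\<^sup>2) * norm z < y \<bullet> z" using nz by (simp add: c_def field_simps)
    finally show ?thesis using True y by (simp add: vangle_def c_def)
  qed
  then show ?thesis unfolding Tset_def circ_cone_def by blast
qed

text \<open>Since \<open>arccos c / 2 < pi / 6\<close>, the Maclaurin bound \<open>sin b \<ge> b - b\<^sup>3/6\<close> gives
  \<open>sin b \<ge> 25/27 b\<close> for \<open>b = arccos c / 2\<close>.\<close>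
lemma arccos_less_of_gt_one_minus_sq:
  fixes c \<alpha> :: real
  assumes \<alpha>: "0 < \<alpha>" "\<alpha> < 1/2" and c: "1 - 2 * \<alpha>\<^sup>2 < c" "c \<le> 1"
  shows "arccos c < 54/25 * \<alpha>"
proof -
  have c_ge: "-1 \<le> c" using c sq_less_quarter[OF \<alpha>] by simp
  define \<beta> where "\<beta> = arccos c / 2"
  have \<beta>: "0 \<le> \<beta>" "\<beta> \<le> pi/2" using c_ge c arccos_lbound arccos_ubound unfolding \<beta>_def by auto
  have "(sin \<beta>)\<^sup>2 < \<alpha>\<^sup>2" using c c_ge by (simp add: \<beta>_def sin_half_sq)
  then have sin_less: "sin \<beta> < \<alpha>" using \<alpha> by (meson power_less_imp_less_base less_imp_le)
  have "\<beta> < pi/6"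
  proof (rule ccontr)
    assume "\<not> \<beta> < pi/6"
    then have "sin (pi/6) \<le> sin \<beta>" using \<beta> by (intro sin_monotone_2pi_le) auto
    then show False using sin_less \<alpha> sin_30 by simp
  qed
  then have \<beta>_less: "\<beta> < 2/3" using pi_less_4 by simp
  have "\<bar>sin \<beta> - (\<Sum>m<3. sin_coeff m * \<beta> ^ m)\<bar> \<le> inverse (fact 3) * \<bar>\<beta>\<bar> ^ 3"
    by (rule Maclaurin_sin_bound)
  moreover have "(\<Sum>m<3. sin_coeff m * \<beta> ^ m) = \<beta>"
    by (simp add: numeral_3_eq_3 sin_coeff_def)
  ultimately have "\<bar>sin \<beta> - \<beta>\<bar> \<le> \<beta> ^ 3 / 6" using \<beta> by (simp add: fact_numeral)
  then have "\<beta> - \<beta> ^ 3 / 6 \<le> sin \<beta>" by linarith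
  moreover have "\<beta> ^ 3 \<le> \<beta> * (4/9)"
  proof -
    have "\<beta> * \<beta> \<le> (2/3) * (2/3)" using \<beta> \<beta>_less by (intro mult_mono) auto
    then show ?thesis using \<beta> mult_left_mono[of "\<beta> * \<beta>" "4/9" \<beta>] by (simp add: power3_eq_cube)
  qed
  ultimately have "\<beta> * (25/27) < \<alpha>" using sin_less by simp
  then show ?thesis unfolding \<beta>_def by simp
qed

lemma norm_orthonormal_combination:
  fixes y u :: "'a::real_inner"
  assumes "norm y = 1" "norm u = 1" "y \<bullet> u = 0"
  shows "norm (a *\<^sub>R y + b *\<^sub>R u) = sqrt (a\<^sup>2 + b\<^sup>2)"
proof -
  have "y \<bullet> y = 1" "u \<bullet> u = 1" "u \<bullet> y = 0" using assms by (auto simp: norm_eq_1 inner_commute)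
  then have "(norm (a *\<^sub>R y + b *\<^sub>R u))\<^sup>2 = a\<^sup>2 + b\<^sup>2"
    using assms unfolding power2_norm_eq_inner
    by (simp add: inner_add_left inner_add_right power2_eq_square)
  then show ?thesis by (metis norm_ge_zero real_sqrt_unique)
qed

lemma cos_sin_dist_sq_le: "(cos (a::real) - cos b)\<^sup>2 + (sin a - sin b)\<^sup>2 \<le> (a - b)\<^sup>2"
proof -
  have "(cos a - cos b)\<^sup>2 + (sin a - sin b)\<^sup>2
      = ((sin a)\<^sup>2 + (cos a)\<^sup>2) + ((sin b)\<^sup>2 + (cos b)\<^sup>2) - 2 * (cos a * cos b + sin a * sin b)"
    by (simp add: power2_eq_square algebra_simps)
  also have "\<dots> = 4 * (sin ((a - b) / 2))\<^sup>2" by (simp add: cos_diff[symmetric] sin_half_sq)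
  also have "\<dots> \<le> 4 * ((a - b) / 2)\<^sup>2"
    using power_mono[OF abs_sin_x_le_abs_x abs_ge_zero, of "(a - b) / 2" 2] by (simp add: power_divide)
  also have "\<dots> = (a - b)\<^sup>2" by (simp add: power2_eq_square field_simps)
  finally show ?thesis .
qed

lemma circ_cone_polar_form:
  fixes y z :: "'a::euclidean_space"
  assumes y: "norm y = 1" and \<alpha>: "0 < \<alpha>" "\<alpha> < 1/2"
    and z: "z \<in> circ_cone y (1 - 2 * \<alpha>\<^sup>2)"
  shows "z = norm z *\<^sub>R y \<or> (\<exists>u \<theta>. norm u = 1 \<and> y \<bullet> u = 0 \<and> 0 \<le> \<theta> \<and> \<theta> < 54/25 * \<alpha>
           \<and> z = norm z *\<^sub>R (cos \<theta> *\<^sub>R y + sin \<theta> *\<^sub>R u))"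
proof -
  have cone: "(1 - 2 * \<alpha>\<^sup>2) * norm z < y \<bullet> z" using z by (simp add: circ_cone_def)
  have "z \<noteq> 0" using cone by auto
  then have nz: "norm z > 0" by simp
  define v where "v = (1 / norm z) *\<^sub>R z"
  define c where "c = y \<bullet> v"
  have zv: "z = norm z *\<^sub>R v" and v: "norm v = 1" using nz by (auto simp: v_def)
  have yy: "y \<bullet> y = 1" and vv: "v \<bullet> v = 1" using y v by (auto simp: norm_eq_1)
  have c: "1 - 2 * \<alpha>\<^sup>2 < c" "c \<le> 1"
    using cone nz norm_cauchy_schwarz[of y v] y v by (auto simp: c_def v_def field_simps)
  show ?thesis
  proof (cases "c = 1")
    case True
    then have "(norm (v - y))\<^sup>2 = 0"
      unfolding power2_norm_eq_inner using yy vv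
      by (simp add: c_def inner_diff_left inner_diff_right inner_commute)
    then show ?thesis using zv by simp
  next
    case False
    define w where "w = v - c *\<^sub>R y"
    have yw: "y \<bullet> w = 0" by (simp add: w_def c_def inner_diff_right yy)
    have "w \<bullet> w = 1 - c\<^sup>2"
      by (simp add: w_def c_def inner_diff_left inner_diff_right yy vv inner_commute power2_eq_square)
    then have nw: "norm w = sqrt (1 - c\<^sup>2)" by (simp add: norm_eq_sqrt_inner)
    have "c\<^sup>2 < 1" using c False sq_less_quarter[OF \<alpha>] by (simp add: abs_square_less_1)
    then have nw_pos: "norm w > 0" using nw by simp
    define u where "u = (1 / norm w) *\<^sub>R w"
    have "-1 \<le> c" using c sq_less_quarter[OF \<alpha>] by simp
    then have "cos (arccos c) = c" "sin (arccos c) = norm w"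
      using c by (simp_all add: sin_arccos nw)
    then have "v = cos (arccos c) *\<^sub>R y + sin (arccos c) *\<^sub>R u"
      using nw_pos by (simp add: u_def w_def)
    moreover have "norm u = 1" "y \<bullet> u = 0" using nw_pos yw by (auto simp: u_def)
    moreover have "0 \<le> arccos c" using c \<open>-1 \<le> c\<close> by (simp add: arccos_lbound)
    moreover have "arccos c < 54/25 * \<alpha>" by (rule arccos_less_of_gt_one_minus_sq[OF \<alpha> c])
    ultimately show ?thesis using zv by blast
  qed
qed

section \<open>Oscillation of \<open>\<phi>\<close> on the cone\<close>

text \<open>Telescoping over \<open>\<lceil>\<theta>/\<delta>\<rceil>\<close> steps of length at most \<open>\<delta>\<close>.\<close>
lemma abs_diff_le_ceiling_mult:
  fixes f :: "real \<Rightarrow> real"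
  assumes \<delta>: "\<delta> > 0" and \<theta>: "\<theta> \<ge> 0"
    and step: "\<And>a b. \<bar>a - b\<bar> \<le> \<delta> \<Longrightarrow> \<bar>f a - f b\<bar> \<le> W"
  shows "\<bar>f \<theta> - f 0\<bar> \<le> of_int \<lceil>\<theta> / \<delta>\<rceil> * W"
proof -
  define n where "n = nat \<lceil>\<theta> / \<delta>\<rceil>"
  have n: "real n = \<lceil>\<theta> / \<delta>\<rceil>" using \<theta> \<delta> by (simp add: n_def)
  show ?thesis
  proof (cases "n = 0")
    case True
    then have "\<theta> / \<delta> \<le> 0" using n le_of_int_ceiling[of "\<theta> / \<delta>"] by simp
    then have "\<theta> = 0" using \<theta> \<delta> by (simp add: divide_le_0_iff)
    then show ?thesis by simp
  next
    case False
    define h where "h = \<theta> / real n"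
    have "\<theta> / \<delta> \<le> real n" using n by simp
    then have h: "h \<le> \<delta>" "0 \<le> h" using False \<delta> \<theta> by (simp_all add: h_def field_simps)
    have "(\<Sum>i<n. f (real (Suc i) * h) - f (real i * h)) = f (real n * h) - f (real 0 * h)"
      by (rule sum_lessThan_telescope[where f="\<lambda>i. f (real i * h)"])
    then have "f \<theta> - f 0 = (\<Sum>i<n. f (real (Suc i) * h) - f (real i * h))"
      using False by (simp add: h_def)
    also have "\<bar>\<dots>\<bar> \<le> (\<Sum>i<n. \<bar>f (real (Suc i) * h) - f (real i * h)\<bar>)" by (rule sum_abs)
    also have "\<dots> \<le> (\<Sum>i<n. W)"
      using h \<theta> by (intro sum_mono step) (simp add: algebra_simps h_def[symmetric])
    finally show ?thesis using n by simp
  qed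
qed

lemma abs_diff_le_along_arc:
  fixes \<phi> :: "'a::euclidean_space \<Rightarrow> real"
  assumes y: "norm y = 1" and u: "norm u = 1" and yu: "y \<bullet> u = 0"
    and t: "0 \<le> \<eta>" "\<eta> < t" and \<alpha>: "0 < \<alpha>" and \<theta>: "0 \<le> \<theta>"
    and W: "\<And>a b. a \<notin> cball x \<eta> \<Longrightarrow> b \<notin> cball x \<eta> \<Longrightarrow> dist a b \<le> \<alpha> \<Longrightarrow> \<bar>\<phi> a - \<phi> b\<bar> \<le> W"
  shows "\<bar>\<phi> (x + t *\<^sub>R (cos \<theta> *\<^sub>R y + sin \<theta> *\<^sub>R u)) - \<phi> (x + t *\<^sub>R y)\<bar> \<le> of_int \<lceil>t * \<theta> / \<alpha>\<rceil> * W"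
proof -
  define p where "p a = x + t *\<^sub>R (cos a *\<^sub>R y + sin a *\<^sub>R u)" for a
  have p_out: "p a \<notin> cball x \<eta>" for a
    using t by (simp add: p_def dist_norm norm_orthonormal_combination[OF y u yu])
  have "dist (p a) (p b) \<le> t * \<bar>a - b\<bar>" for a b
  proof -
    have "p a - p b = (t * (cos a - cos b)) *\<^sub>R y + (t * (sin a - sin b)) *\<^sub>R u"
      by (simp add: p_def algebra_simps)
    then have "dist (p a) (p b) = t * sqrt ((cos a - cos b)\<^sup>2 + (sin a - sin b)\<^sup>2)"
      using t by (simp add: dist_norm norm_orthonormal_combination[OF y u yu]
          power_mult_distrib distrib_left[symmetric] real_sqrt_mult)
    also have "\<dots> \<le> t * \<bar>a - b\<bar>"
      using t real_sqrt_le_mono[OF cos_sin_dist_sq_le[of a b]] by (intro mult_left_mono) auto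
    finally show ?thesis .
  qed
  moreover have "t * \<bar>a - b\<bar> \<le> \<alpha>" if "\<bar>a - b\<bar> \<le> \<alpha> / t" for a b
    using that t by (simp add: field_simps)
  ultimately have "\<bar>\<phi> (p a) - \<phi> (p b)\<bar> \<le> W" if "\<bar>a - b\<bar> \<le> \<alpha> / t" for a b
    using that by (intro W p_out) (meson order_trans)
  then have "\<bar>\<phi> (p \<theta>) - \<phi> (p 0)\<bar> \<le> of_int \<lceil>\<theta> / (\<alpha> / t)\<rceil> * W"
    using t \<alpha> \<theta> by (intro abs_diff_le_ceiling_mult[where f="\<lambda>a. \<phi> (p a)"]) auto
  then show ?thesis by (simp add: p_def mult.commute)
qed

lemma norm_le_SUP_norm_ball:
  fixes H :: "'a::euclidean_space \<Rightarrow> 'b::real_normed_vector"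
  assumes H: "continuous_on (cball x \<eta>) H" and z: "z \<in> ball x \<eta>"
  shows "norm (H z) \<le> (SUP w\<in>ball x \<eta>. norm (H w))"
proof (rule cSUP_upper[OF z])
  have "compact (H ` cball x \<eta>)" by (intro compact_continuous_image H compact_cball)
  then have "bounded ((\<lambda>w. norm (H w)) ` cball x \<eta>)"
    by (metis bounded_norm_comp compact_imp_bounded image_comp)
  then show "bdd_above ((\<lambda>w. norm (H w)) ` ball x \<eta>)"
    by (rule bdd_above_mono[OF bounded_imp_bdd_above]) auto
qed

lemma norm_le_on_cball_of_derivative_bound:
  fixes G :: "'a::euclidean_space \<Rightarrow> 'b::real_normed_vector"
  assumes \<eta>: "\<eta> > 0"
    and G': "\<And>z. z \<in> ball x \<eta> \<Longrightarrow> (G has_derivative blinfun_apply (H z)) (at z within ball x \<eta>)"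
    and G: "continuous_on (cball x \<eta>) G"
    and B: "\<And>z. z \<in> ball x \<eta> \<Longrightarrow> norm (H z) \<le> B"
    and w: "w \<in> cball x \<eta>"
  shows "norm (G w) \<le> norm (G x) + B * \<eta>"
proof -
  have "norm (G v) \<le> norm (G x) + B * \<eta>" if v: "v \<in> ball x \<eta>" for v
  proof -
    have x: "x \<in> ball x \<eta>" using \<eta> by simp
    have B0: "0 \<le> B" using B[OF x] norm_ge_zero[of "H x"] by linarith
    have "norm (G v - G x) \<le> B * norm (v - x)"
      using v x B by (intro differentiable_bound[OF convex_ball G']) (auto simp: norm_blinfun.rep_eq)
    also have "\<dots> \<le> B * \<eta>"
      using v B0
      by (intro mult_left_mono) (auto simp: dist_norm norm_minus_commute)
    finally show ?thesis using norm_triangle_ineq2[of "G v" "G x"] by linarith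
  qed
  then show ?thesis using continuous_on_closure_norm_le[of "ball x \<eta>" G] G w \<eta> by simp
qed

lemma abs_diff_le_on_cball:
  fixes \<phi> :: "'a::euclidean_space \<Rightarrow> real" and G :: "'a \<Rightarrow> 'a" and H :: "'a \<Rightarrow> ('a \<Rightarrow>\<^sub>L 'a)"
  assumes \<eta>: "\<eta> > 0"
    and D1: "\<forall>z\<in>cball x \<eta>. (\<phi> has_derivative (\<lambda>h. G z \<bullet> h)) (at z within cball x \<eta>)"
    and D1c: "continuous_on (cball x \<eta>) G"
    and D2: "\<forall>z\<in>cball x \<eta>. (G has_derivative blinfun_apply (H z)) (at z within cball x \<eta>)"
    and D2c: "continuous_on (cball x \<eta>) H"
    and a: "a \<in> cball x \<eta>" and b: "b \<in> cball x \<eta>"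
  shows "\<bar>\<phi> a - \<phi> b\<bar> \<le> (norm (G x) + (SUP z\<in>ball x \<eta>. norm (H z)) * \<eta>) * norm (a - b)"
proof -
  define L where "L = norm (G x) + (SUP z\<in>ball x \<eta>. norm (H z)) * \<eta>"
  have G_le: "norm (G z) \<le> L" if "z \<in> cball x \<eta>" for z
    unfolding L_def
  proof (rule norm_le_on_cball_of_derivative_bound[OF \<eta> _ D1c _ that])
    show "(G has_derivative blinfun_apply (H z)) (at z within ball x \<eta>)" if "z \<in> ball x \<eta>" for z
      using D2 that by (meson ball_subset_cball has_derivative_subset subsetD)
  qed (rule norm_le_SUP_norm_ball[OF D2c])
  have "norm (\<phi> a - \<phi> b) \<le> L * norm (a - b)"
  proof (rule differentiable_bound[OF convex_cball _ _ a b])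
    show "(\<phi> has_derivative (\<lambda>h. G z \<bullet> h)) (at z within cball x \<eta>)" if "z \<in> cball x \<eta>" for z
      using D1 that by auto
    show "onorm (\<lambda>h. G z \<bullet> h) \<le> L" if "z \<in> cball x \<eta>" for z
    proof (rule onorm_bound)
      show "0 \<le> L" using G_le[OF that] norm_ge_zero[of "G z"] by linarith
      show "norm (G z \<bullet> h) \<le> L * norm h" for h
        using Cauchy_Schwarz_ineq2[of "G z" h] mult_right_mono[OF G_le[OF that] norm_ge_zero[of h]]
        by simp
    qed
  qed
  then show ?thesis by (simp add: L_def)
qed

lemma abs_diff_le_modulus_out:
  fixes \<phi> :: "'a::euclidean_space \<Rightarrow> real"
  assumes bnd: "bounded (range \<phi>)"
    and "a \<notin> cball x \<eta>" "b \<notin> cball x \<eta>" "dist a b \<le> \<alpha>"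
  shows "\<bar>\<phi> a - \<phi> b\<bar> \<le> modulus_out \<phi> x \<eta> \<alpha>"
proof -
  obtain M where M: "\<And>z. \<bar>\<phi> z\<bar> \<le> M" using bnd unfolding bounded_iff by auto
  have "\<bar>\<phi> z - \<phi> w\<bar> \<le> 2 * M" for z w using M[of z] M[of w] by linarith
  then have "bdd_above ((\<lambda>(z, w). \<bar>\<phi> z - \<phi> w\<bar>) ` S)" for S
    by (intro bdd_aboveI2[where M="2 * M"]) (simp split: prod.splits)
  then show ?thesis unfolding modulus_out_def using assms(2-) by (intro cSUP_upper2[where x="(a, b)"]) auto
qed

lemma norm_diff_axis_le:
  fixes y z :: "'a::euclidean_space"
  assumes y: "norm y = 1" and \<alpha>: "0 \<le> \<alpha>" and z: "z \<in> circ_cone y (1 - 2 * \<alpha>\<^sup>2)"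
  shows "norm (z - norm z *\<^sub>R y) \<le> 2 * \<alpha> * norm z"
proof -
  have yy: "y \<bullet> y = 1" using y by (simp add: norm_eq_1)
  have zz: "z \<bullet> z = norm z * norm z" using dot_square_norm[of z] by (simp add: power2_eq_square)
  have "(norm (z - norm z *\<^sub>R y))\<^sup>2 = z \<bullet> z - 2 * norm z * (y \<bullet> z) + (norm z)\<^sup>2 * (y \<bullet> y)"
    unfolding power2_norm_eq_inner using zz
    by (simp add: inner_diff_left inner_diff_right inner_commute power2_eq_square algebra_simps)
  also have "\<dots> = 2 * norm z * (norm z - y \<bullet> z)"
    using yy zz by (simp add: power2_eq_square algebra_simps)
  also have "\<dots> \<le> 2 * norm z * (2 * \<alpha>\<^sup>2 * norm z)"
    using z by (intro mult_left_mono) (auto simp: circ_cone_def algebra_simps)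
  also have "\<dots> = (2 * \<alpha> * norm z)\<^sup>2" by (simp add: power2_eq_square)
  finally show ?thesis by (rule power2_le_imp_le) (use \<alpha> in auto)
qed

lemma abs_diff_axis_le_outside:
  fixes \<phi> :: "'a::euclidean_space \<Rightarrow> real"
  assumes bnd: "bounded (range \<phi>)" and y: "norm y = 1" and \<alpha>: "0 < \<alpha>" "\<alpha> < 1/2"
    and z: "z \<in> circ_cone y (1 - 2 * \<alpha>\<^sup>2)" and \<eta>: "0 \<le> \<eta>" "\<eta> < norm z"
    and R: "norm z < R" "1 < R"
  shows "\<bar>\<phi> (x + z) - \<phi> (x + norm z *\<^sub>R y)\<bar> \<le> 3 * R * modulus_out \<phi> x \<eta> \<alpha>"
proof -
  let ?W = "modulus_out \<phi> x \<eta> \<alpha>"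
  have "x + z \<notin> cball x \<eta>" using \<eta> by (simp add: dist_norm)
  then have W: "0 \<le> ?W" using abs_diff_le_modulus_out[OF bnd, of "x + z" x \<eta> "x + z" \<alpha>] \<alpha> by simp
  from circ_cone_polar_form[OF y \<alpha> z] show ?thesis
  proof (elim disjE exE conjE)
    assume "z = norm z *\<^sub>R y"
    then show ?thesis using W R by simp
  next
    fix u \<theta> assume u: "norm u = 1" "y \<bullet> u = 0" and \<theta>: "0 \<le> \<theta>" "\<theta> < 54/25 * \<alpha>"
      and z_eq: "z = norm z *\<^sub>R (cos \<theta> *\<^sub>R y + sin \<theta> *\<^sub>R u)"
    define q where "q = norm z * \<theta> / \<alpha>"
    have "norm z * \<theta> < R * (54/25 * \<alpha>)"
      using \<alpha> \<theta> R by (intro mult_strict_mono) auto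
    then have q: "q < 54/25 * R" using \<alpha> by (simp add: q_def field_simps)
    have "of_int \<lceil>q\<rceil> \<le> 3 * R"
    proof (cases "R \<ge> 4/3")
      case True
      then show ?thesis using q of_int_ceiling_le_add_one[of q] by linarith
    next
      case False
      then have "\<lceil>q\<rceil> \<le> 3" using q by (simp add: ceiling_le_iff)
      then show ?thesis using R by linarith
    qed
    then have "of_int \<lceil>q\<rceil> * ?W \<le> 3 * R * ?W" using W by (rule mult_right_mono)
    moreover have "\<bar>\<phi> (x + z) - \<phi> (x + norm z *\<^sub>R y)\<bar> \<le> of_int \<lceil>q\<rceil> * ?W"
      unfolding q_def using abs_diff_le_along_arc[OF y u \<eta> \<alpha>(1) \<theta>(1) abs_diff_le_modulus_out[OF bnd]]
      by (subst z_eq) simp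
    ultimately show ?thesis by linarith
  qed
qed

lemma abs_diff_axis_le:
  fixes \<phi> :: "'a::euclidean_space \<Rightarrow> real" and G :: "'a \<Rightarrow> 'a" and H :: "'a \<Rightarrow> ('a \<Rightarrow>\<^sub>L 'a)"
  assumes \<eta>: "\<eta> > 0" and bnd: "bounded (range \<phi>)"
    and D1: "\<forall>z\<in>cball x \<eta>. (\<phi> has_derivative (\<lambda>h. G z \<bullet> h)) (at z within cball x \<eta>)"
    and D1c: "continuous_on (cball x \<eta>) G"
    and D2: "\<forall>z\<in>cball x \<eta>. (G has_derivative blinfun_apply (H z)) (at z within cball x \<eta>)"
    and D2c: "continuous_on (cball x \<eta>) H"
    and y: "norm y = 1" and \<alpha>: "0 < \<alpha>" "\<alpha> < 1/2"
    and z: "z \<in> circ_cone y (1 - 2 * \<alpha>\<^sup>2)" and R: "R > max \<eta> 1" "norm z < R"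
  shows "\<bar>\<phi> (x + z) - \<phi> (x + norm z *\<^sub>R y)\<bar>
     \<le> max (2 * (norm (G x) + 2 * ((1/2) * (SUP z\<in>ball x \<eta>. norm (H z))) * \<eta>) * \<eta> * \<alpha>)
             (3 * R * modulus_out \<phi> x \<eta> \<alpha>)"
proof (cases "norm z \<le> \<eta>")
  case True
  define L where "L = norm (G x) + (SUP z\<in>ball x \<eta>. norm (H z)) * \<eta>"
  have "x \<in> ball x \<eta>" using \<eta> by simp
  then have "0 \<le> (SUP z\<in>ball x \<eta>. norm (H z))"
    using norm_le_SUP_norm_ball[OF D2c] norm_ge_zero[of "H x"] by (meson order_trans)
  then have L: "0 \<le> L" using \<eta> by (simp add: L_def)
  have "\<bar>\<phi> (x + z) - \<phi> (x + norm z *\<^sub>R y)\<bar> \<le> L * norm (z - norm z *\<^sub>R y)"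
    using abs_diff_le_on_cball[OF \<eta> D1 D1c D2 D2c, of "x + z" "x + norm z *\<^sub>R y"] True y
    by (simp add: L_def dist_norm)
  also have "\<dots> \<le> L * (2 * \<alpha> * \<eta>)"
    using norm_diff_axis_le[OF y _ z] True \<alpha> L
    by (intro mult_left_mono) (auto intro: order_trans mult_left_mono)
  finally show ?thesis by (simp add: L_def algebra_simps)
next
  case False
  then show ?thesis
    by (intro max.coboundedI2 abs_diff_axis_le_outside[OF bnd y \<alpha> z]) (use \<eta> R in auto)
qed

definition set_average :: "'a measure \<Rightarrow> 'a set \<Rightarrow> ('a \<Rightarrow> real) \<Rightarrow> real" where
  "set_average M A f = (\<integral>x. indicator A x * f x \<partial>M) / measure M A"

lemma integrable_indicator_mult_bounded:
  fixes f :: "'a \<Rightarrow> real"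
  assumes A: "A \<in> fmeasurable M" and f: "f \<in> borel_measurable M" and B: "\<And>x. \<bar>f x\<bar> \<le> B"
  shows "integrable M (\<lambda>x. indicator A x * f x)"
proof (rule Bochner_Integration.integrable_bound)
  show "integrable M (\<lambda>x. B * indicator A x)" using A by (simp add: fmeasurable_def)
  show "AE x in M. norm (indicator A x * f x) \<le> norm (B * indicator A x)"
  proof (rule AE_I2)
    show "norm (indicator A x * f x) \<le> norm (B * indicator A x)" for x
      using B[of x] by (cases "x \<in> A") auto
  qed
  show "(\<lambda>x. indicator A x * f x) \<in> borel_measurable M"
    using A by (intro borel_measurable_times borel_measurable_indicator f) (simp add: fmeasurable_def)
qed

lemma abs_integral_indicator_mult_le:
  fixes f :: "'a \<Rightarrow> real"
  assumes A: "A \<in> fmeasurable M" and f: "integrable M (\<lambda>x. indicator A x * f x)"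
    and S: "\<And>x. x \<in> A \<Longrightarrow> \<bar>f x\<bar> \<le> S"
  shows "\<bar>\<integral>x. indicator A x * f x \<partial>M\<bar> \<le> S * measure M A"
proof -
  have "\<bar>\<integral>x. indicator A x * f x \<partial>M\<bar> \<le> (\<integral>x. \<bar>indicator A x * f x\<bar> \<partial>M)"
    by (rule integral_abs_bound)
  also have "\<dots> \<le> (\<integral>x. S * indicator A x \<partial>M)"
  proof (rule integral_mono)
    show "integrable M (\<lambda>x. \<bar>indicator A x * f x\<bar>)" using f by (rule integrable_abs)
    show "integrable M (\<lambda>x. S * indicator A x)" using A by (simp add: fmeasurable_def)
    show "\<bar>indicator A x * f x\<bar> \<le> S * indicator A x" for x
      using S[of x] by (cases "x \<in> A") auto
  qed
  also have "\<dots> = S * measure M A" using A by simp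
  finally show ?thesis .
qed

lemma set_average_diff_le:
  fixes f g :: "'a \<Rightarrow> real"
  assumes A: "A \<in> fmeasurable M" "0 < measure M A"
    and f: "f \<in> borel_measurable M" "\<And>x. \<bar>f x\<bar> \<le> S"
    and g: "g \<in> borel_measurable M" "\<And>x. \<bar>g x\<bar> \<le> S"
    and D: "\<And>x. x \<in> A \<Longrightarrow> \<bar>f x - g x\<bar> \<le> D"
  shows "\<bar>set_average M A f - set_average M A g\<bar> \<le> D"
proof -
  have int_f: "integrable M (\<lambda>x. indicator A x * f x)"
    and int_g: "integrable M (\<lambda>x. indicator A x * g x)"
    using integrable_indicator_mult_bounded[OF A(1)] f g by auto
  have int_diff: "integrable M (\<lambda>x. indicator A x * (f x - g x))"
    using Bochner_Integration.integrable_diff[OF int_f int_g] by (simp add: right_diff_distrib)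
  have "set_average M A f - set_average M A g = (\<integral>x. indicator A x * (f x - g x) \<partial>M) / measure M A"
    using int_f int_g by (simp add: set_average_def diff_divide_distrib right_diff_distrib)
  also have "\<bar>\<dots>\<bar> \<le> D"
    using abs_integral_indicator_mult_le[OF A(1) int_diff D] A(2) by (simp add: abs_div pos_divide_le_eq)
  finally show ?thesis .
qed

lemma set_average_Un_le:
  fixes f :: "'a \<Rightarrow> real"
  assumes A: "A \<in> fmeasurable M" "0 < measure M A" and B: "B \<in> fmeasurable M" and AB: "A \<inter> B = {}"
    and f: "f \<in> borel_measurable M" "\<And>x. \<bar>f x\<bar> \<le> S"
  shows "\<bar>set_average M A f - set_average M (A \<union> B) f\<bar> \<le> 2 * S * (measure M B / measure M (A \<union> B))"
proof -
  define a b where "a = measure M A" and "b = measure M B"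
  define P Q where "P = (\<integral>x. indicator A x * f x \<partial>M)" and "Q = (\<integral>x. indicator B x * f x \<partial>M)"
  have int_A: "integrable M (\<lambda>x. indicator A x * f x)"
    and int_B: "integrable M (\<lambda>x. indicator B x * f x)"
    using integrable_indicator_mult_bounded A B f by auto
  have "indicator (A \<union> B) x * f x = indicator A x * f x + indicator B x * f x" for x
    using AB by (auto split: split_indicator)
  then have "(\<integral>x. indicator (A \<union> B) x * f x \<partial>M) = P + Q"
    using int_A int_B by (simp add: P_def Q_def)
  moreover have AB_measure: "measure M (A \<union> B) = a + b"
    using A B AB by (simp add: a_def b_def measure_Union fmeasurable_def less_top)
  ultimately have avg_AB: "set_average M (A \<union> B) f = (P + Q) / (a + b)"
    by (simp add: set_average_def)
  have a: "0 < a" and b: "0 \<le> b" using A by (auto simp: a_def b_def)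
  have P: "\<bar>P\<bar> \<le> S * a" and Q: "\<bar>Q\<bar> \<le> S * b"
    unfolding P_def Q_def a_def b_def
    by (rule abs_integral_indicator_mult_le[OF A(1) int_A] abs_integral_indicator_mult_le[OF B int_B],
        use f(2) in blast)+
  have "\<bar>P * b - Q * a\<bar> \<le> \<bar>P\<bar> * b + \<bar>Q\<bar> * a"
    using a b abs_triangle_ineq4[of "P * b" "Q * a"] by (simp add: abs_mult)
  also have "\<dots> \<le> S * a * b + S * b * a"
    using P Q a b by (intro add_mono mult_right_mono) auto
  finally have "\<bar>P * b - Q * a\<bar> \<le> 2 * S * b * a" by (simp add: algebra_simps)
  moreover have "P / a - (P + Q) / (a + b) = (P * b - Q * a) / (a * (a + b))"
    using a b by (simp add: field_simps)
  moreover have "2 * S * (b / (a + b)) * (a * (a + b)) = 2 * S * b * a"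
    using a b by (simp add: field_simps)
  ultimately have "\<bar>P / a - (P + Q) / (a + b)\<bar> \<le> 2 * S * (b / (a + b))"
    using a b by (simp add: abs_div pos_divide_le_eq)
  moreover have "set_average M A f = P / a" by (simp add: set_average_def P_def a_def)
  ultimately show ?thesis by (simp only: avg_AB AB_measure b_def[symmetric])
qed

section \<open>The one-dimensional measure \<open>\<mu>\<^sub>s\<close>\<close>

lemma Cs_pos: "0 < s \<Longrightarrow> s < 1 \<Longrightarrow> 0 < Cs s"
  unfolding Cs_def by (intro divide_pos_pos mult_pos_pos) auto

lemma CNs_pos: "0 < s \<Longrightarrow> s < 1 \<Longrightarrow> 0 < CNs N s"
  unfolding CNs_def by (intro divide_pos_pos mult_pos_pos) (auto intro!: Gamma_real_pos add_nonneg_pos)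

lemma sets_mu_s [measurable_cong]: "sets (mu_s s) = sets borel"
  by (simp add: mu_s_def)

lemma sets_mu_sN [measurable_cong]: "sets (mu_sN s) = sets borel"
  by (simp add: mu_sN_def)

lemma emeasure_mu_s_atLeast:
  assumes s: "0 < s" "s < 1" and a: "0 < a"
  shows "emeasure (mu_s s) {a..} = ennreal (Cs s * a powr (- (2 * s)) / (2 * s))"
proof -
  have "emeasure (mu_s s) {a..} = (\<integral>\<^sup>+ t. ennreal (Cs s * t powr (- 1 - 2 * s)) * indicator {a..} t \<partial>lborel)"
    unfolding mu_s_def using a by (subst emeasure_density) (auto intro!: nn_integral_cong split: split_indicator)
  also have "\<dots> = ennreal (0 - (- Cs s / (2 * s)) * a powr (- (2 * s)))"
  proof (rule nn_integral_FTC_atLeast)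
    show "((\<lambda>t. - Cs s / (2 * s) * t powr (- (2 * s))) has_real_derivative Cs s * t powr (- 1 - 2 * s)) (at t)"
      if "a \<le> t" for t
    proof -
      have "((\<lambda>t. - Cs s / (2 * s) * t powr (- (2 * s))) has_real_derivative
          - Cs s / (2 * s) * (- (2 * s) * t powr (- (2 * s) - 1))) (at t)"
        using that a by (intro DERIV_cmult has_real_derivative_powr) auto
      moreover have "- (2 * s) - 1 = - 1 - 2 * s" by simp
      moreover have "- Cs s / (2 * s) * (- (2 * s) * t powr (- 1 - 2 * s)) = Cs s * t powr (- 1 - 2 * s)"
        using s by (simp add: field_simps)
      ultimately show ?thesis by simp
    qed
    have "((\<lambda>t::real. t powr (- (2 * s))) \<longlongrightarrow> 0) at_top"
      using s by (intro tendsto_neg_powr filterlim_ident) auto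
    from tendsto_mult[OF tendsto_const this, of "- Cs s / (2 * s)"]
    show "((\<lambda>t. - Cs s / (2 * s) * t powr (- (2 * s))) \<longlongrightarrow> 0) at_top" by simp
  qed (use Cs_pos[OF s] in auto)
  finally show ?thesis by simp
qed

lemma emeasure_mu_s_greaterThan:
  assumes s: "0 < s" "s < 1" and a: "0 < a"
  shows "emeasure (mu_s s) {a<..} = ennreal (Cs s * a powr (- (2 * s)) / (2 * s))"
proof -
  have "emeasure (mu_s s) {a<..}
      = (\<integral>\<^sup>+ t. ennreal (if t > 0 then Cs s * t powr (- 1 - 2 * s) else 0) * indicator {a<..} t \<partial>lborel)"
    unfolding mu_s_def by (rule emeasure_density) auto
  also have "\<dots> = (\<integral>\<^sup>+ t. ennreal (if t > 0 then Cs s * t powr (- 1 - 2 * s) else 0) * indicator {a..} t \<partial>lborel)"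
    by (rule nn_integral_cong_AE)
      (use AE_lborel_singleton[of a] in \<open>eventually_elim, auto split: split_indicator\<close>)
  also have "\<dots> = emeasure (mu_s s) {a..}"
    unfolding mu_s_def by (rule emeasure_density[symmetric]) auto
  finally show ?thesis using emeasure_mu_s_atLeast[OF assms] by simp
qed

lemma measure_mu_s_greaterThan:
  "0 < s \<Longrightarrow> s < 1 \<Longrightarrow> 0 < a \<Longrightarrow> measure (mu_s s) {a<..} = Cs s * a powr (- (2 * s)) / (2 * s)"
  using emeasure_mu_s_greaterThan Cs_pos by (simp add: measure_def)

lemma measure_mu_s_atLeast:
  "0 < s \<Longrightarrow> s < 1 \<Longrightarrow> 0 < a \<Longrightarrow> measure (mu_s s) {a..} = Cs s * a powr (- (2 * s)) / (2 * s)"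
  using emeasure_mu_s_atLeast Cs_pos by (simp add: measure_def)

lemma measure_mu_s_greaterThanLessThan_pos:
  assumes s: "0 < s" "s < 1" and \<epsilon>: "0 < \<epsilon>" "\<epsilon> < R"
  shows "0 < measure (mu_s s) {\<epsilon><..<R}"
proof -
  have "emeasure (mu_s s) {\<epsilon><..<R} \<le> emeasure (mu_s s) {\<epsilon><..}" by (rule emeasure_mono) auto
  then have "emeasure (mu_s s) {\<epsilon><..<R} \<noteq> top"
    by (rule neq_top_trans[rotated]) (simp add: emeasure_mu_s_greaterThan[OF s \<epsilon>(1)])
  moreover have "emeasure (mu_s s) {R..} \<noteq> top" using emeasure_mu_s_atLeast[of s R] s \<epsilon> by simp
  ultimately have "measure (mu_s s) ({\<epsilon><..<R} \<union> {R..}) = measure (mu_s s) {\<epsilon><..<R} + measure (mu_s s) {R..}"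
    by (intro measure_Union) (auto simp: sets_mu_s)
  moreover have "{\<epsilon><..<R} \<union> {R..} = {\<epsilon><..}" using \<epsilon> by auto
  ultimately have "measure (mu_s s) {\<epsilon><..} = measure (mu_s s) {\<epsilon><..<R} + measure (mu_s s) {R..}"
    by simp
  then have "measure (mu_s s) {\<epsilon><..<R} = Cs s * \<epsilon> powr (- (2 * s)) / (2 * s) - Cs s * R powr (- (2 * s)) / (2 * s)"
    using s \<epsilon> by (simp add: measure_mu_s_greaterThan measure_mu_s_atLeast)
  moreover have "Cs s * R powr (- (2 * s)) / (2 * s) < Cs s * \<epsilon> powr (- (2 * s)) / (2 * s)"
    using s \<epsilon> Cs_pos[OF s]
    by (intro divide_strict_right_mono mult_strict_left_mono powr_less_mono2_neg) auto
  ultimately show ?thesis by simp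
qed

lemma set_average_mu_s_truncation:
  assumes s: "0 < s" "s < 1" and \<epsilon>: "0 < \<epsilon>" "\<epsilon> < R"
    and g: "g \<in> borel_measurable borel" "\<And>t. \<bar>g t\<bar> \<le> S"
  shows "\<bar>set_average (mu_s s) {\<epsilon><..<R} g - avg_mu_s s \<epsilon> g\<bar> \<le> 2 * (\<epsilon> / R) powr (2 * s) * S"
proof -
  have fin: "A \<in> fmeasurable (mu_s s)" if "A \<subseteq> {\<epsilon><..}" "A \<in> sets borel" for A
  proof -
    have "emeasure (mu_s s) A \<le> emeasure (mu_s s) {\<epsilon><..}" using that by (intro emeasure_mono) auto
    then have "emeasure (mu_s s) A \<noteq> top"
      by (rule neq_top_trans[rotated]) (simp add: emeasure_mu_s_greaterThan[OF s \<epsilon>(1)])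
    then show ?thesis using that by (simp add: fmeasurable_def less_top)
  qed
  have Un: "{\<epsilon><..<R} \<union> {R..} = {\<epsilon><..}" using \<epsilon> by auto
  have ratio: "measure (mu_s s) {R..} / measure (mu_s s) {\<epsilon><..} = (\<epsilon> / R) powr (2 * s)"
    using s \<epsilon> Cs_pos[OF s]
    by (simp add: measure_mu_s_greaterThan measure_mu_s_atLeast powr_minus_divide powr_divide field_simps)
  have avg: "avg_mu_s s \<epsilon> g = set_average (mu_s s) {\<epsilon><..} g"
    by (simp add: avg_mu_s_def set_average_def)
  have "\<bar>set_average (mu_s s) {\<epsilon><..<R} g - set_average (mu_s s) ({\<epsilon><..<R} \<union> {R..}) g\<bar>
      \<le> 2 * S * (measure (mu_s s) {R..} / measure (mu_s s) ({\<epsilon><..<R} \<union> {R..}))"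
    using fin \<epsilon> g measure_mu_s_greaterThanLessThan_pos[OF s \<epsilon>]
    by (intro set_average_Un_le fin) auto
  then show ?thesis unfolding Un ratio avg by (simp only: mult.commute mult.left_commute)
qed

section \<open>Integration over the cone in polar coordinates\<close>

lemma emeasure_circ_cone_cball:
  fixes y :: "'a::euclidean_space"
  assumes r: "0 \<le> r"
  shows "emeasure lborel (circ_cone y k \<inter> cball 0 r)
       = ennreal (measure lborel (circ_cone y k \<inter> cball 0 1) * r ^ DIM('a))"
proof (cases "r = 0")
  case True
  then have "circ_cone y k \<inter> cball 0 r = {}" by (auto simp: circ_cone_def)
  then show ?thesis using True by simp
next
  case False
  let ?C = "circ_cone y k" and ?N = "DIM('a)"
  have "emeasure lborel (?C \<inter> cball 0 1) \<le> emeasure lborel (cball (0::'a) 1)" by (intro emeasure_mono) auto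
  then have fin: "emeasure lborel (?C \<inter> cball 0 1) = ennreal (measure lborel (?C \<inter> cball 0 1))"
    using emeasure_lborel_cball_finite[of "0::'a" 1] by (intro emeasure_eq_ennreal_measure) auto
  have scale: "(lborel :: 'a measure) = density (distr lborel borel (\<lambda>z. 0 + r *\<^sub>R z)) (\<lambda>_. \<bar>r\<bar> ^ ?N)"
    using False by (rule lborel_affine)
  have "(\<lambda>z. 0 + r *\<^sub>R z) -` (?C \<inter> cball 0 r) = ?C \<inter> cball 0 1"
    using False r by (auto simp: circ_cone_def mult.left_commute[of k r] mult_le_cancel_left1)
  then have "emeasure (distr lborel borel (\<lambda>z. 0 + r *\<^sub>R z)) (?C \<inter> cball 0 r)
      = emeasure lborel (?C \<inter> cball 0 1)"
    by (subst emeasure_distr) auto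
  then have "emeasure lborel (?C \<inter> cball 0 r) = ennreal (r ^ ?N) * emeasure lborel (?C \<inter> cball 0 1)"
    using r by (subst scale) (simp add: emeasure_density_const ennreal_power)
  then show ?thesis using r by (simp add: fin ennreal_mult' mult.commute)
qed

lemma emeasure_circ_cone_ball:
  fixes y :: "'a::euclidean_space"
  assumes r: "0 \<le> r"
  shows "emeasure lborel (circ_cone y k \<inter> ball 0 r)
       = ennreal (measure lborel (circ_cone y k \<inter> cball 0 1) * r ^ DIM('a))"
proof -
  let ?C = "circ_cone y k"
  have "emeasure lborel (cball (0::'a) r - ball 0 r)
      = emeasure lborel (cball (0::'a) r) - emeasure lborel (ball (0::'a) r)"
    by (intro emeasure_Diff) (auto simp: emeasure_ball[OF r])
  also have "\<dots> = 0" by (simp add: emeasure_ball[OF r] emeasure_cball[OF r])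
  finally have "cball (0::'a) r - ball 0 r \<in> null_sets lborel" by auto
  then have null: "?C \<inter> (cball 0 r - ball 0 r) \<in> null_sets lborel"
    by (rule null_sets_subset) auto
  have "?C \<inter> cball 0 r = ?C \<inter> ball 0 r \<union> ?C \<inter> (cball 0 r - ball 0 r)" by auto
  then have "emeasure lborel (?C \<inter> cball 0 r) = emeasure lborel (?C \<inter> ball 0 r)"
    using emeasure_Un_null_set[OF _ null, of "?C \<inter> ball 0 r"] by auto
  then show ?thesis using emeasure_circ_cone_cball[OF r, of y k] by simp
qed

lemma measure_circ_cone_cball_pos:
  fixes y :: "'a::euclidean_space"
  assumes y: "norm y = 1" and k: "0 \<le> k" "k < 1"
  shows "0 < measure lborel (circ_cone y k \<inter> cball 0 1)"
proof -
  define \<delta> where "\<delta> = (1 - k) / 8"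
  have \<delta>: "0 < \<delta>" "\<delta> \<le> 1/2" using k by (simp_all add: \<delta>_def)
  have "ball ((1/2) *\<^sub>R y) \<delta> \<subseteq> circ_cone y k \<inter> cball 0 1"
  proof
    fix z assume "z \<in> ball ((1/2) *\<^sub>R y) \<delta>"
    then have z: "norm (z - (1/2) *\<^sub>R y) < \<delta>" by (simp add: dist_norm norm_minus_commute)
    have "y \<bullet> z = 1/2 + y \<bullet> (z - (1/2) *\<^sub>R y)"
      using y by (simp add: inner_diff_right norm_eq_1)
    moreover have "\<bar>y \<bullet> (z - (1/2) *\<^sub>R y)\<bar> \<le> norm (z - (1/2) *\<^sub>R y)"
      using Cauchy_Schwarz_ineq2[of y "z - (1/2) *\<^sub>R y"] y by simp
    ultimately have yz: "1/2 - \<delta> \<le> y \<bullet> z" using z by linarith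
    have "norm z \<le> norm ((1/2) *\<^sub>R y) + norm (z - (1/2) *\<^sub>R y)"
      using norm_triangle_ineq[of "(1/2) *\<^sub>R y" "z - (1/2) *\<^sub>R y"] by simp
    then have nz: "norm z \<le> 1/2 + \<delta>" using z y by simp
    have "k * norm z \<le> k * (1/2 + \<delta>)" using nz k by (intro mult_left_mono) auto
    also have "\<dots> < 1/2 - \<delta>"
    proof -
      have "(1 - k) * (1/2) \<le> (1 - k) * (1/2 + \<delta>)" using k \<delta> by (intro mult_left_mono) auto
      moreover have "k * (1/2 + \<delta>) = (1/2 + \<delta>) - (1 - k) * (1/2 + \<delta>)" by (simp add: left_diff_distrib)
      ultimately show ?thesis using \<delta> \<delta>_def by linarith
    qed
    finally show "z \<in> circ_cone y k \<inter> cball 0 1"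
      using yz nz \<delta> by (auto simp: circ_cone_def)
  qed
  then have "emeasure lborel (ball ((1/2) *\<^sub>R y) \<delta>) \<le> emeasure lborel (circ_cone y k \<inter> cball 0 1)"
    by (intro emeasure_mono) auto
  moreover have "0 < emeasure lborel (ball ((1/2) *\<^sub>R y) \<delta>)"
    using \<delta> by (simp add: emeasure_ball)
  ultimately have "0 < emeasure lborel (circ_cone y k \<inter> cball 0 1)" by order
  then show ?thesis using emeasure_circ_cone_cball[of 1 y k] by simp
qed

lemma emeasure_circ_cone_annulus_norm_greaterThan:
  fixes y :: "'a::euclidean_space"
  assumes \<epsilon>: "0 \<le> \<epsilon>" "\<epsilon> < R"
  shows "emeasure lborel (circ_cone y k \<inter> {z. \<epsilon> < norm z \<and> norm z < R} \<inter> {z. r < norm z})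
       = ennreal (measure lborel (circ_cone y k \<inter> cball 0 1) * (R ^ DIM('a) - (min R (max \<epsilon> r)) ^ DIM('a)))"
proof -
  let ?C = "circ_cone y k" and ?N = "DIM('a)"
  define c where "c = measure lborel (?C \<inter> cball 0 1)"
  define m where "m = min R (max \<epsilon> r)"
  have m: "0 \<le> m" "m \<le> R" using \<epsilon> by (auto simp: m_def)
  show ?thesis
  proof (cases "m = R")
    case True
    then have "?C \<inter> {z. \<epsilon> < norm z \<and> norm z < R} \<inter> {z. r < norm z} = {}"
      by (auto simp: m_def)
    then show ?thesis using True by (simp add: m_def[symmetric])
  next
    case False
    then have "?C \<inter> {z. \<epsilon> < norm z \<and> norm z < R} \<inter> {z. r < norm z} = ?C \<inter> ball 0 R - ?C \<inter> cball 0 m"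
      using m by (auto simp: m_def)
    moreover have "emeasure lborel (?C \<inter> ball 0 R - ?C \<inter> cball 0 m)
        = emeasure lborel (?C \<inter> ball 0 R) - emeasure lborel (?C \<inter> cball 0 m)"
      using m False emeasure_circ_cone_cball[OF m(1), of y k] by (intro emeasure_Diff) auto
    ultimately show ?thesis
      using m \<epsilon> emeasure_circ_cone_cball[OF m(1), of y k] emeasure_circ_cone_ball[of R y k]
        measure_nonneg[of lborel "?C \<inter> cball 0 1"] power_mono[of m R "DIM('a)"]
      by (simp add: ennreal_minus m_def[symmetric] right_diff_distrib)
  qed
qed

lemma emeasure_density_power_greaterThan:
  fixes c :: real and N :: nat
  assumes c: "0 \<le> c" and \<epsilon>: "0 \<le> \<epsilon>" "\<epsilon> < R"
  shows "emeasure (density lborel (\<lambda>t. ennreal (indicator {\<epsilon><..<R} t * (c * real N * t ^ (N - 1))))) {r<..}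
       = ennreal (c * (R ^ N - (min R (max \<epsilon> r)) ^ N))"
proof -
  define m where "m = min R (max \<epsilon> r)"
  have m: "0 \<le> m" "m \<le> R" using \<epsilon> by (auto simp: m_def)
  have "AE t in lborel. ennreal (indicator {\<epsilon><..<R} t * (c * real N * t ^ (N - 1))) * indicator {r<..} t
      = ennreal (c * real N * t ^ (N - 1)) * indicator {m..R} t"
    using AE_lborel_singleton[of m] AE_lborel_singleton[of R]
    by eventually_elim (auto simp: m_def split: split_indicator)
  then have "emeasure (density lborel (\<lambda>t. ennreal (indicator {\<epsilon><..<R} t * (c * real N * t ^ (N - 1))))) {r<..}
      = (\<integral>\<^sup>+ t. ennreal (c * real N * t ^ (N - 1)) * indicator {m..R} t \<partial>lborel)"
    by (subst emeasure_density) (auto intro: nn_integral_cong_AE)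
  also have "\<dots> = ennreal (c * R ^ N - c * m ^ N)"
    using m c by (intro nn_integral_FTC_Icc) (auto intro!: derivative_eq_intros)
  finally show ?thesis by (simp add: m_def right_diff_distrib)
qed

lemma distr_norm_circ_cone_annulus:
  fixes y :: "'a::euclidean_space" and k :: real
  assumes \<epsilon>: "0 \<le> \<epsilon>" "\<epsilon> < R"
  defines "T \<equiv> circ_cone y k \<inter> {z. \<epsilon> < norm z \<and> norm z < R}"
    and "c \<equiv> measure lborel (circ_cone y k \<inter> cball 0 1)"
  shows "distr (density lborel (indicator T)) borel norm
       = density lborel (\<lambda>t. ennreal (indicator {\<epsilon><..<R} t * (c * real DIM('a) * t ^ (DIM('a) - 1))))"
proof (rule measure_eqI_lessThan)
  have "emeasure (distr (density lborel (indicator T)) borel norm) {r<..} = emeasure lborel (T \<inter> {z. r < norm z})"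
    for r
  proof -
    have "norm -` {r<..} = {z::'a. r < norm z}" by auto
    then show ?thesis by (subst emeasure_distr) (auto simp: T_def emeasure_restricted)
  qed
  then show "emeasure (distr (density lborel (indicator T)) borel norm) {r<..} < \<infinity>"
    and "emeasure (distr (density lborel (indicator T)) borel norm) {r<..}
       = emeasure (density lborel (\<lambda>t. ennreal (indicator {\<epsilon><..<R} t * (c * real DIM('a) * t ^ (DIM('a) - 1))))) {r<..}"
    for r
    using emeasure_circ_cone_annulus_norm_greaterThan[OF \<epsilon>, of y k r]
      emeasure_density_power_greaterThan[OF _ \<epsilon>, of c "DIM('a)" r]
    by (simp_all add: T_def c_def)
qed simp_all

lemma integral_circ_cone_annulus_radial:
  fixes y :: "'a::euclidean_space" and k :: real and h :: "real \<Rightarrow> real"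
  assumes \<epsilon>: "0 \<le> \<epsilon>" "\<epsilon> < R" and h [measurable]: "h \<in> borel_measurable borel"
  defines "T \<equiv> circ_cone y k \<inter> {z. \<epsilon> < norm z \<and> norm z < R}"
    and "c \<equiv> measure lborel (circ_cone y k \<inter> cball 0 1)"
  shows "(\<integral>z. indicator T z * h (norm z) \<partial>lborel)
       = (\<integral>t. indicator {\<epsilon><..<R} t * (c * real DIM('a) * t ^ (DIM('a) - 1)) * h t \<partial>lborel)"
proof -
  have [measurable]: "T \<in> sets borel" unfolding T_def by measurable
  have "(\<integral>z. indicator T z * h (norm z) \<partial>lborel)
      = integral\<^sup>L (density lborel (\<lambda>z. ennreal (indicator T z))) (\<lambda>z. h (norm z))"
    by (subst integral_density) auto
  also have "density lborel (\<lambda>z. ennreal (indicator T z)) = density lborel (indicator T)"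
    by (simp add: ennreal_indicator)
  also have "integral\<^sup>L (density lborel (indicator T)) (\<lambda>z. h (norm z))
      = integral\<^sup>L (distr (density lborel (indicator T)) borel norm) h"
    by (subst integral_distr) auto
  also have "\<dots> = (\<integral>t. indicator {\<epsilon><..<R} t * (c * real DIM('a) * t ^ (DIM('a) - 1)) * h t \<partial>lborel)"
    unfolding T_def c_def distr_norm_circ_cone_annulus[OF \<epsilon>]
    using \<epsilon> by (subst integral_density) (auto split: split_indicator intro!: AE_I2)
  finally show ?thesis .
qed

lemma integral_mu_s_greaterThanLessThan:
  assumes s: "0 < s" "s < 1" and \<epsilon>: "0 \<le> \<epsilon>" and g [measurable]: "g \<in> borel_measurable borel"
  shows "(\<integral>t. indicator {\<epsilon><..<R} t * g t \<partial>mu_s s)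
       = Cs s * (\<integral>t. indicator {\<epsilon><..<R} t * (t powr (- 1 - 2 * s) * g t) \<partial>lborel)"
proof -
  have "(\<integral>t. indicator {\<epsilon><..<R} t * g t \<partial>mu_s s)
      = (\<integral>t. (if t > 0 then Cs s * t powr (- 1 - 2 * s) else 0) *\<^sub>R (indicator {\<epsilon><..<R} t * g t) \<partial>lborel)"
    unfolding mu_s_def using Cs_pos[OF s] by (subst integral_density) (auto intro!: AE_I2)
  also have "\<dots> = (\<integral>t. Cs s * (indicator {\<epsilon><..<R} t * (t powr (- 1 - 2 * s) * g t)) \<partial>lborel)"
    using \<epsilon> by (intro Bochner_Integration.integral_cong) (auto split: split_indicator)
  finally show ?thesis by simp
qed

lemma integral_mu_sN_Tset:
  fixes y :: "'a::euclidean_space"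
  assumes y: "norm y = 1" and s: "0 < s" "s < 1" and \<alpha>: "0 < \<alpha>" "\<alpha> < 1/2"
    and \<epsilon>: "0 \<le> \<epsilon>" "\<epsilon> < R" and g [measurable]: "g \<in> borel_measurable borel"
  defines "c \<equiv> measure lborel (circ_cone y (1 - 2 * \<alpha>\<^sup>2) \<inter> cball 0 1)"
  shows "(\<integral>z. indicator (Tset y \<epsilon> R \<alpha>) z * g (norm z) \<partial>mu_sN s)
       = c * real DIM('a) * CNs DIM('a) s * (\<integral>t. indicator {\<epsilon><..<R} t * (t powr (- 1 - 2 * s) * g t) \<partial>lborel)"
proof -
  let ?N = "DIM('a)" and ?K = "CNs DIM('a) s"
  define T where "T = circ_cone y (1 - 2 * \<alpha>\<^sup>2) \<inter> {z. \<epsilon> < norm z \<and> norm z < R}"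
  have T: "Tset y \<epsilon> R \<alpha> = T" unfolding T_def by (rule Tset_eq_circ_cone[OF y \<alpha>])
  have [measurable]: "T \<in> sets borel" unfolding T_def by measurable
  have "(\<integral>z. indicator T z * g (norm z) \<partial>mu_sN s)
      = (\<integral>z. (if z \<noteq> 0 then ?K * norm z powr (- real ?N - 2 * s) else 0) *\<^sub>R (indicator T z * g (norm z)) \<partial>lborel)"
    unfolding mu_sN_def using CNs_pos[OF s, of ?N]
    by (subst integral_density) (auto intro!: AE_I2 mult_nonneg_nonneg)
  also have "\<dots> = (\<integral>z. indicator T z * (?K * norm z powr (- real ?N - 2 * s) * g (norm z)) \<partial>lborel)"
    using \<epsilon> by (intro Bochner_Integration.integral_cong) (auto simp: T_def split: split_indicator)
  also have "\<dots> = (\<integral>t. indicator {\<epsilon><..<R} t * (c * real ?N * t ^ (?N - 1))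
      * (?K * t powr (- real ?N - 2 * s) * g t) \<partial>lborel)"
    unfolding T_def c_def by (rule integral_circ_cone_annulus_radial[OF \<epsilon>]) measurable
  also have "\<dots> = (\<integral>t. c * real ?N * ?K * (indicator {\<epsilon><..<R} t * (t powr (- 1 - 2 * s) * g t)) \<partial>lborel)"
  proof (rule Bochner_Integration.integral_cong [OF refl])
    fix t :: real
    show "indicator {\<epsilon><..<R} t * (c * real ?N * t ^ (?N - 1)) * (?K * t powr (- real ?N - 2 * s) * g t)
        = c * real ?N * ?K * (indicator {\<epsilon><..<R} t * (t powr (- 1 - 2 * s) * g t))"
    proof (cases "t \<in> {\<epsilon><..<R}")
      case True
      then have "t ^ (?N - 1) * t powr (- real ?N - 2 * s) = t powr (- 1 - 2 * s)"
        using \<epsilon> DIM_positive[where 'a='a]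
        by (simp add: powr_realpow[symmetric] powr_add[symmetric] of_nat_diff)
      then show ?thesis using True by (simp add: ac_simps)
    qed simp
  qed
  finally show ?thesis using T by simp
qed

lemma integral_mu_sN_Tset_radial:
  fixes y :: "'a::euclidean_space"
  assumes y: "norm y = 1" and s: "0 < s" "s < 1" and \<alpha>: "0 < \<alpha>" "\<alpha> < 1/2"
    and \<epsilon>: "0 \<le> \<epsilon>" "\<epsilon> < R"
  shows "\<exists>\<kappa>::real. 0 < \<kappa> \<and> (\<forall>g\<in>borel_measurable borel. (\<integral>z. indicator (Tset y \<epsilon> R \<alpha>) z * g (norm z) \<partial>mu_sN s)
           = \<kappa> * (\<integral>t. indicator {\<epsilon><..<R} t * g t \<partial>mu_s s))"
proof -
  define \<kappa> where "\<kappa> = measure lborel (circ_cone y (1 - 2 * \<alpha>\<^sup>2) \<inter> cball (0::'a) 1)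
      * real DIM('a) * CNs DIM('a) s / Cs s"
  have "0 < measure lborel (circ_cone y (1 - 2 * \<alpha>\<^sup>2) \<inter> cball (0::'a) 1)"
    using sq_less_quarter[OF \<alpha>] \<alpha> by (intro measure_circ_cone_cball_pos[OF y]) auto
  then have "0 < \<kappa>" using CNs_pos[OF s] Cs_pos[OF s] by (simp add: \<kappa>_def)
  moreover have "\<forall>g\<in>borel_measurable borel. (\<integral>z. indicator (Tset y \<epsilon> R \<alpha>) z * g (norm z) \<partial>mu_sN s)
      = \<kappa> * (\<integral>t. indicator {\<epsilon><..<R} t * g t \<partial>mu_s s)"
  proof
    fix g :: "real \<Rightarrow> real" assume g: "g \<in> borel_measurable borel"
    show "(\<integral>z. indicator (Tset y \<epsilon> R \<alpha>) z * g (norm z) \<partial>mu_sN s)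
        = \<kappa> * (\<integral>t. indicator {\<epsilon><..<R} t * g t \<partial>mu_s s)"
      using Cs_pos[OF s] integral_mu_sN_Tset[OF y s \<alpha> \<epsilon> g] integral_mu_s_greaterThanLessThan[OF s \<epsilon>(1) g]
      by (simp add: \<kappa>_def)
  qed
  ultimately show ?thesis by blast
qed

lemma emeasure_mu_sN_finite:
  fixes A :: "'a::euclidean_space set"
  assumes s: "0 < s" "s < 1" and \<epsilon>: "0 < \<epsilon>"
    and A: "A \<in> sets borel" "A \<subseteq> {z. \<epsilon> \<le> norm z \<and> norm z \<le> R}"
  shows "emeasure (mu_sN s) A < \<infinity>"
proof -
  let ?K = "CNs DIM('a) s" and ?p = "- real DIM('a) - 2 * s"
  have "emeasure (mu_sN s) A = (\<integral>\<^sup>+ z. ennreal (if z \<noteq> 0 then ?K * norm z powr ?p else 0) * indicator A z \<partial>lborel)"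
    unfolding mu_sN_def by (rule emeasure_density) (use A in auto)
  also have "\<dots> \<le> (\<integral>\<^sup>+ z. ennreal (?K * \<epsilon> powr ?p) * indicator (cball (0::'a) R) z \<partial>lborel)"
  proof (rule nn_integral_mono)
    fix z :: 'a
    have "?K * norm z powr ?p \<le> ?K * \<epsilon> powr ?p" if "\<epsilon> \<le> norm z"
      using that \<epsilon> s less_imp_le[OF CNs_pos[OF s, of "DIM('a)"]] by (intro mult_left_mono powr_mono2') auto
    then show "ennreal (if z \<noteq> 0 then ?K * norm z powr ?p else 0) * indicator A z
        \<le> ennreal (?K * \<epsilon> powr ?p) * indicator (cball 0 R) z"
      using A \<epsilon> by (auto split: split_indicator intro: ennreal_leI)
  qed
  also have "\<dots> = ennreal (?K * \<epsilon> powr ?p) * emeasure lborel (cball (0::'a) R)"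
    by (rule nn_integral_cmult_indicator) simp
  also have "\<dots> < \<infinity>"
    using emeasure_lborel_cball_finite[of "0::'a" R] by (simp add: ennreal_mult_less_top)
  finally show ?thesis .
qed

lemma Tset_fmeasurable_mu_sN:
  fixes y :: "'a::euclidean_space"
  assumes y: "norm y = 1" and s: "0 < s" "s < 1" and \<alpha>: "0 < \<alpha>" "\<alpha> < 1/2" and \<epsilon>: "0 < \<epsilon>"
  shows "Tset y \<epsilon> R \<alpha> \<in> fmeasurable (mu_sN s)"
proof -
  have T: "Tset y \<epsilon> R \<alpha> \<in> sets borel"
    unfolding Tset_eq_circ_cone[OF y \<alpha>] by measurable
  moreover have "emeasure (mu_sN s) (Tset y \<epsilon> R \<alpha>) < \<infinity>"
    using T s \<epsilon> by (intro emeasure_mu_sN_finite[where R=R and \<epsilon>=\<epsilon>]) (auto simp: Tset_def)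
  ultimately show ?thesis by (simp add: fmeasurable_def sets_mu_sN)
qed

lemma measure_mu_sN_Tset_pos:
  fixes y :: "'a::euclidean_space"
  assumes y: "norm y = 1" and s: "0 < s" "s < 1" and \<alpha>: "0 < \<alpha>" "\<alpha> < 1/2" and \<epsilon>: "0 < \<epsilon>" "\<epsilon> < R"
  shows "0 < measure (mu_sN s) (Tset y \<epsilon> R \<alpha>)"
proof -
  obtain \<kappa> :: real where \<kappa>: "0 < \<kappa>" and radial: "\<And>g. g \<in> borel_measurable borel \<Longrightarrow>
      (\<integral>z. indicator (Tset y \<epsilon> R \<alpha>) z * g (norm z) \<partial>mu_sN s) = \<kappa> * (\<integral>t. indicator {\<epsilon><..<R} t * g t \<partial>mu_s s)"
    using integral_mu_sN_Tset_radial[OF y s \<alpha> less_imp_le[OF \<epsilon>(1)] \<epsilon>(2)] by auto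
  show ?thesis
    using radial[of "\<lambda>_. 1"] \<kappa> measure_mu_s_greaterThanLessThan_pos[OF s \<epsilon>]
    by (simp add: mu_sN_def mu_s_def)
qed

lemma set_average_mu_sN_Tset_radial:
  fixes y :: "'a::euclidean_space"
  assumes y: "norm y = 1" and s: "0 < s" "s < 1" and \<alpha>: "0 < \<alpha>" "\<alpha> < 1/2"
    and \<epsilon>: "0 \<le> \<epsilon>" "\<epsilon> < R" and g: "g \<in> borel_measurable borel"
  shows "set_average (mu_sN s) (Tset y \<epsilon> R \<alpha>) (\<lambda>z. g (norm z)) = set_average (mu_s s) {\<epsilon><..<R} g"
proof -
  obtain \<kappa> :: real where \<kappa>: "0 < \<kappa>" and radial: "\<And>g. g \<in> borel_measurable borel \<Longrightarrow>
      (\<integral>z. indicator (Tset y \<epsilon> R \<alpha>) z * g (norm z) \<partial>mu_sN s) = \<kappa> * (\<integral>t. indicator {\<epsilon><..<R} t * g t \<partial>mu_s s)"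
    using integral_mu_sN_Tset_radial[OF y s \<alpha> \<epsilon>] by auto
  show ?thesis
    using radial[OF g] radial[of "\<lambda>_. 1"] \<kappa> by (simp add: set_average_def mu_sN_def mu_s_def)
qed

theorem lemma5p1:
  fixes \<phi> :: "'a::euclidean_space \<Rightarrow> real"
    and x :: 'a and \<eta> s \<epsilon> R \<alpha> :: real
    and G :: "'a \<Rightarrow> 'a" and H :: "'a \<Rightarrow> ('a \<Rightarrow>\<^sub>L 'a)"
  assumes s: "1/2 < s" "s < 1"
    and eta: "\<eta> > 0"
    and bnd: "bounded (range \<phi>)"
    and meas: "\<phi> \<in> borel_measurable borel"
    and D1: "\<forall>z\<in>cball x \<eta>. (\<phi> has_derivative (\<lambda>h. G z \<bullet> h)) (at z within cball x \<eta>)"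
    and D1c: "continuous_on (cball x \<eta>) G"
    and D2: "\<forall>z\<in>cball x \<eta>. (G has_derivative blinfun_apply (H z)) (at z within cball x \<eta>)"
    and D2c: "continuous_on (cball x \<eta>) H"
    and uc: "uniformly_continuous_on (- cball x \<eta>) \<phi>"
    and eps: "0 < \<epsilon>" "\<epsilon> < \<eta>"
    and R: "R > max \<eta> 1"
    and alpha: "0 < \<alpha>" "\<alpha> < 1/2"
  shows "\<forall>y. norm y = 1 \<longrightarrow>
     \<bar>avg_mu_sN s (Tset y \<epsilon> R \<alpha>) (\<lambda>z. \<phi> (x + z)) - avg_mu_s s \<epsilon> (\<lambda>t. \<phi> (x + t *\<^sub>R y))\<bar>
     \<le> 2 * (\<epsilon> / R) powr (2 * s) * (SUP z. \<bar>\<phi> z\<bar>)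
       + max (2 * (norm (G x) + 2 * ((1/2) * (SUP z\<in>ball x \<eta>. norm (H z))) * \<eta>) * \<eta> * \<alpha>)
             (3 * R * modulus_out \<phi> x \<eta> \<alpha>)"
proof (intro allI impI)
  fix y :: 'a assume y: "norm y = 1"
  let ?M = "max (2 * (norm (G x) + 2 * ((1/2) * (SUP z\<in>ball x \<eta>. norm (H z))) * \<eta>) * \<eta> * \<alpha>)
                (3 * R * modulus_out \<phi> x \<eta> \<alpha>)"
  define T g S where "T = Tset y \<epsilon> R \<alpha>" and "g = (\<lambda>t. \<phi> (x + t *\<^sub>R y))" and "S = (SUP z. \<bar>\<phi> z\<bar>)"
  have s': "0 < s" "s < 1" and \<epsilon>: "0 < \<epsilon>" "\<epsilon> < R" using s eps R by auto
  have g_meas [measurable]: "g \<in> borel_measurable borel" unfolding g_def using meas by measurable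
  obtain B where "\<And>z. \<bar>\<phi> z\<bar> \<le> B" using bnd by (auto simp: bounded_iff)
  then have \<phi>_le: "\<bar>\<phi> z\<bar> \<le> S" for z unfolding S_def by (intro cSUP_upper2 bdd_aboveI2) auto
  have "\<bar>set_average (mu_sN s) T (\<lambda>z. \<phi> (x + z)) - set_average (mu_sN s) T (\<lambda>z. g (norm z))\<bar> \<le> ?M"
  proof (rule set_average_diff_le)
    show "\<bar>\<phi> (x + z) - g (norm z)\<bar> \<le> ?M" if "z \<in> T" for z
    proof -
      have "z \<in> circ_cone y (1 - 2 * \<alpha>\<^sup>2)" "norm z < R"
        using that Tset_eq_circ_cone[OF y alpha] by (auto simp: T_def)
      then show ?thesis unfolding g_def by (rule abs_diff_axis_le[OF eta bnd D1 D1c D2 D2c y alpha _ R])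
    qed
  qed (use meas Tset_fmeasurable_mu_sN[OF y s' alpha \<epsilon>(1)] measure_mu_sN_Tset_pos[OF y s' alpha \<epsilon>] \<phi>_le
      in \<open>auto simp: T_def g_def\<close>)
  moreover have "set_average (mu_sN s) T (\<lambda>z. g (norm z)) = set_average (mu_s s) {\<epsilon><..<R} g"
    unfolding T_def using \<epsilon> by (intro set_average_mu_sN_Tset_radial[OF y s' alpha]) auto
  moreover have "\<bar>set_average (mu_s s) {\<epsilon><..<R} g - avg_mu_s s \<epsilon> g\<bar> \<le> 2 * (\<epsilon> / R) powr (2 * s) * S"
    by (rule set_average_mu_s_truncation[OF s' \<epsilon> g_meas]) (simp add: g_def \<phi>_le)
  moreover have "avg_mu_sN s T (\<lambda>z. \<phi> (x + z)) = set_average (mu_sN s) T (\<lambda>z. \<phi> (x + z))"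
    by (simp add: avg_mu_sN_def set_average_def)
  ultimately show "\<bar>avg_mu_sN s (Tset y \<epsilon> R \<alpha>) (\<lambda>z. \<phi> (x + z)) - avg_mu_s s \<epsilon> (\<lambda>t. \<phi> (x + t *\<^sub>R y))\<bar>
      \<le> 2 * (\<epsilon> / R) powr (2 * s) * (SUP z. \<bar>\<phi> z\<bar>) + ?M"
    unfolding T_def g_def S_def by linarith
qed

end
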